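(* Let $(\alpha,s)$ be admissible. Then $\mu^{\alpha}_{s,r}\in\mathcal{UI}$ (and hence $\mu^\alpha_{s,r}$ is $\boxplus$-infinitely divisible) if either (1) $0<\alpha\le1$ and $1\le r\le2$, or (2) $1\le\alpha\le2$ and $1\le r\le\frac{2}{\alpha}$.
   Context: Powers: for $w\in\mathbb{C}\setminus[0,\infty)$ and $p\in\{\alpha,1/\alpha\}$, $w^p:=e^{p\log_{(1)}w}$ with $\operatorname{Im}\log_{(1)}w\in(0,2\pi)$; $w^{1/r}$ is the principal power on $\mathbb{C}\setminus(-\infty,0]$; $r^{1/\alpha}>0$. A pair $(\alpha,s)$ ($0<\alpha\le2$, $s\ne0$, $\arg s\in(-\pi,\pi]$) is admissible if either $0<\alpha\le1$ and $(1-\alpha)\pi\le\arg s\le\pi$, or $1<\alpha\le2$ and $0\le\arg s\le(2-\alpha)\pi$. For $r\ge1$ and admissible $(\alpha,s)$, $\mu^\alpha_{s,r}$ is the probability measure on $\mathbb{R}$ with Cauchy transform $\int\frac{\mu^\alpha_{s,r}(dx)}{z-x}=-r^{1/\alpha}\big(\frac{1-(1-s(-1/z)^{\alpha})^{1/r}}{s}\big)^{1/\alpha}$, $z\in\mathbb{C}_+$. For a probability measure $\mu$, $F_\mu=1/G_\mu$; $\mu\in\mathcal{UI}$ means $F_\mu$ is univalent on $\mathbb{C}_+$ and $F_\mu^{-1}:F_\mu(\mathbb{C}_+)\to\mathbb{C}_+$ extends analytically to a univalent function on all of $\mathbb{C}_+$. *)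

theory Defs
  imports "HOL-Probability.Probability"
begin

text \<open>Argument with values in (0, 2 pi) for w not in [0, infinity), and the
  corresponding branch of the logarithm and of the power w^p.\<close>
definition arg1 :: "complex \<Rightarrow> real" where
  "arg1 w = (if Arg w > 0 then Arg w else Arg w + 2 * pi)"

definition log1 :: "complex \<Rightarrow> complex" where
  "log1 w = complex_of_real (ln (norm w)) + \<i> * complex_of_real (arg1 w)"

definition pow1 :: "complex \<Rightarrow> real \<Rightarrow> complex" where
  "pow1 w p = exp (complex_of_real p * log1 w)"

text \<open>Admissible pairs (alpha, s); Arg s lies in (-pi, pi].\<close>
definition admissible :: "real \<Rightarrow> complex \<Rightarrow> bool" where
  "admissible \<alpha> s \<longleftrightarrow> 0 < \<alpha> \<and> \<alpha> \<le> 2 \<and> s \<noteq> 0 \<and>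
     ((\<alpha> \<le> 1 \<and> (1 - \<alpha>) * pi \<le> Arg s \<and> Arg s \<le> pi) \<or>
      (1 < \<alpha> \<and> 0 \<le> Arg s \<and> Arg s \<le> (2 - \<alpha>) * pi))"

definition cauchy_transform :: "real measure \<Rightarrow> complex \<Rightarrow> complex" where
  "cauchy_transform \<mu> z = (\<integral>x. 1 / (z - complex_of_real x) \<partial>\<mu>)"

definition F_transform :: "real measure \<Rightarrow> complex \<Rightarrow> complex" where
  "F_transform \<mu> z = 1 / cauchy_transform \<mu> z"

definition upper_half :: "complex set" where
  "upper_half = {z. 0 < Im z}"

definition UI :: "real measure \<Rightarrow> bool" where
  "UI \<mu> \<longleftrightarrow> inj_on (F_transform \<mu>) upper_half \<and>
     (\<exists>g. g holomorphic_on upper_half \<and> inj_on g upper_half \<and>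
          (\<forall>z\<in>upper_half. F_transform \<mu> z \<in> upper_half \<longrightarrow> g (F_transform \<mu> z) = z))"

definition mu_G :: "real \<Rightarrow> complex \<Rightarrow> real \<Rightarrow> complex \<Rightarrow> complex" where
  "mu_G \<alpha> s r z = - complex_of_real (r powr (1 / \<alpha>)) *
     pow1 ((1 - (1 - s * pow1 (-1 / z) \<alpha>) powr complex_of_real (1 / r)) / s) (1 / \<alpha>)"

end

theory Submission
  imports Defs
begin

text \<open>
  The proof inverts \<open>F_\<mu> = 1/G_\<mu>\<close> explicitly. With \<open>u = -1/z\<close> the given Cauchy transform is
  \<open>G(z) = -r^(1/\<alpha>) ((1 - (1 - s u^\<alpha>)^(1/r)) / s)^(1/\<alpha>)\<close>, and solving \<open>1/G(z) = w\<close> for \<open>z\<close> gives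
  the candidate \<open>F_inv(w) = -1 / ((1 - (1 - s (-1/w)^\<alpha> / r)^r) / s)^(1/\<alpha>)\<close>, with the branch of the
  last root fixed by a rotation. Everything reduces to bookkeeping of arguments: \<open>arg_in z a b\<close>
  says that \<open>z = exp l\<close> with \<open>a < Im l < b\<close>.

  Admissibility and the bounds on \<open>r\<close> keep every window of width at most
  \<open>2 pi\<close>. In the locale \<open>inversion_window\<close> it follows that \<open>F_inv\<close> is holomorphic on the upper
  half plane (no logarithm meets its branch cut), injective (each step is injective on its
  window) and a left inverse of \<open>F_\<mu>\<close>; the theorem is then immediate from the definition of UI.
\<close>

text \<open>On \<open>(-pi, pi)\<close> the sign of the sine is the sign of its argument; this is how angle
  inequalities are read off from imaginary parts.\<close>
lemma sin_pos_iff: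
  fixes x :: real
  assumes "-pi < x" "x < pi"
  shows "0 < sin x \<longleftrightarrow> 0 < x"
proof
  assume pos: "0 < sin x"
  show "0 < x"
  proof (rule ccontr)
    assume "\<not> 0 < x"
    then have "0 \<le> sin (-x)" using assms by (intro sin_ge_zero) auto
    then show False using pos by simp
  qed
qed (use assms in \<open>auto intro: sin_gt_zero\<close>)

lemma sin_neg_iff:
  fixes x :: real
  assumes "-pi < x" "x < pi"
  shows "sin x < 0 \<longleftrightarrow> x < 0"
  using sin_pos_iff[of "-x"] assms by auto

lemma sin_concave: "concave_on {0..pi} sin"
  by (rule f''_le0_imp_concave[where f'=cos and f''="\<lambda>x. - sin x"])
     (auto intro!: derivative_eq_intros sin_ge_zero)

lemma sin_scale:
  fixes t x :: real
  assumes "0 \<le> t" "t \<le> 1" "0 \<le> x" "x \<le> pi"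
  shows "t * sin x \<le> sin (t * x)"
  using assms concave_onD[OF sin_concave, of t 0 x] by simp

text \<open>Combining Young's inequality \<open>R^(1-\<beta>) \<le> \<beta> + (1-\<beta>) R\<close> with concavity of the sine; this is
  the estimate behind the fact that powers with exponent at most 1 do not decrease arguments.\<close>
lemma sin_young_bound:
  fixes R \<beta> \<eta> :: real
  assumes "0 < R" "0 < \<beta>" "\<beta> \<le> 1" "0 \<le> \<eta>" "\<eta> \<le> pi"
  shows "R * sin \<eta> \<le> R powr \<beta> * sin (\<beta> * \<eta>) + R powr \<beta> * R * sin ((1 - \<beta>) * \<eta>)"
proof -
  have young: "R powr (1 - \<beta>) \<le> \<beta> + (1 - \<beta>) * R"
    using Youngs_inequality_0[of \<beta> "1 - \<beta>" 1 R] assms by simp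
  have "R * sin \<eta> = R powr \<beta> * (R powr (1 - \<beta>) * sin \<eta>)"
    using assms by (simp add: powr_add[symmetric])
  also have "\<dots> \<le> R powr \<beta> * ((\<beta> + (1 - \<beta>) * R) * sin \<eta>)"
    using young assms sin_ge_zero[of \<eta>] by (intro mult_left_mono mult_right_mono) auto
  also have "\<dots> = R powr \<beta> * (\<beta> * sin \<eta>) + R powr \<beta> * R * ((1 - \<beta>) * sin \<eta>)"
    by (simp add: algebra_simps)
  also have "\<dots> \<le> R powr \<beta> * sin (\<beta> * \<eta>) + R powr \<beta> * R * sin ((1 - \<beta>) * \<eta>)"
    using assms by (intro add_mono mult_left_mono sin_scale) auto
  finally show ?thesis .
qed

text \<open>The function \<open>x \<mapsto> sin (r x) / sin x ^ r\<close> is decreasing on \<open>(0, pi/r)\<close> for \<open>r \<ge> 1\<close>,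
  because its logarithmic derivative \<open>r (cot (r x) - cot x)\<close> is nonpositive.\<close>
lemma log_sin_ratio_antitone:
  fixes r \<mu> c :: real
  assumes r: "1 \<le> r" and \<mu>: "0 < \<mu>" "\<mu> \<le> c" and rc: "r * c < pi"
  shows "ln (sin (r * c)) - r * ln (sin c) \<le> ln (sin (r * \<mu>)) - r * ln (sin \<mu>)"
proof -
  define f where "f x = ln (sin (r * x)) - r * ln (sin x)" for x
  have interval: "0 < x" "x \<le> r * x" "r * x < pi" if "x \<in> {\<mu>..c}" for x
  proof -
    have "r * x \<le> r * c" using that r by (intro mult_left_mono) auto
    then show "r * x < pi" using rc by linarith
    show "0 < x" using that \<mu> by simp
    then show "x \<le> r * x" using r by (simp add: mult_le_cancel_right1)
  qed
  have sin_pos: "0 < sin x" "0 < sin (r * x)" if "x \<in> {\<mu>..c}" for x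
  proof -
    have "0 < x" "x < pi" "0 < r * x" "r * x < pi" using interval[OF that] by linarith+
    then show "0 < sin x" "0 < sin (r * x)" by (blast intro: sin_gt_zero)+
  qed
  have deriv: "(f has_real_derivative r * (cos (r * x) / sin (r * x) - cos x / sin x)) (at x)"
    if "x \<in> {\<mu>..c}" for x
    using sin_pos[OF that] unfolding f_def
    by (auto intro!: derivative_eq_intros simp: field_simps)
  text \<open>The derivative is nonpositive because the cotangent is decreasing on \<open>(0, pi)\<close>.\<close>
  have deriv_nonpos: "r * (cos (r * x) / sin (r * x) - cos x / sin x) \<le> 0" if "x \<in> {\<mu>..c}" for x
  proof -
    have "0 \<le> sin (r * x - x)"
      using interval[OF that] by (intro sin_ge_zero) auto
    then have "cos (r * x) * sin x \<le> sin (r * x) * cos x"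
      by (simp add: sin_diff algebra_simps)
    then have "cos (r * x) / sin (r * x) \<le> cos x / sin x"
      using sin_pos[OF that] by (simp add: divide_simps mult.commute)
    then show ?thesis using r by (simp add: mult_nonneg_nonpos)
  qed
  have "f c \<le> f \<mu>"
  proof (rule DERIV_nonpos_imp_decreasing_open[of \<mu> c f])
    show "\<exists>y. (f has_real_derivative y) (at x) \<and> y \<le> 0" if "\<mu> < x" "x < c" for x
      using deriv deriv_nonpos that by fastforce
    show "continuous_on {\<mu>..c} f"
      using deriv by (meson DERIV_isCont continuous_at_imp_continuous_on)
  qed (use \<mu> in simp)
  then show ?thesis by (simp add: f_def)
qed

lemma sin_power_ratio_antitone:
  fixes r \<mu> c :: real
  assumes r: "1 \<le> r" and \<mu>: "0 < \<mu>" "\<mu> < c" and rc: "r * c \<le> pi"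
  shows "sin (r * c) * sin \<mu> powr r \<le> sin (r * \<mu>) * sin c powr r"
proof (cases "r * c = pi")
  case True
  have "r * \<mu> \<le> r * c" using r \<mu> by (intro mult_left_mono) auto
  then have "0 \<le> sin (r * \<mu>)" using r \<mu> True by (intro sin_ge_zero) auto
  then show ?thesis using True by simp
next
  case False
  then have rc': "r * c < pi" using rc by simp
  have c_le: "c \<le> r * c" using r \<mu> by (simp add: mult_le_cancel_right1)
  have "r * \<mu> < r * c" using r \<mu> by simp
  moreover have "0 < r * \<mu>" using r \<mu> by simp
  moreover have "c < pi" using c_le rc' by linarith
  ultimately have pos: "0 < sin \<mu>" "0 < sin c" "0 < sin (r * \<mu>)" "0 < sin (r * c)"
    using \<mu> rc' by (simp_all add: sin_gt_zero)
  have "ln (sin (r * c)) + r * ln (sin \<mu>) \<le> ln (sin (r * \<mu>)) + r * ln (sin c)"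
    using log_sin_ratio_antitone[OF r _ _ rc', of \<mu>] \<mu> by simp
  then have "exp (ln (sin (r * c)) + r * ln (sin \<mu>)) \<le> exp (ln (sin (r * \<mu>)) + r * ln (sin c))"
    by simp
  then show ?thesis using pos by (simp add: exp_add powr_def mult.commute)
qed

text \<open>This is the estimate behind the stretching of argument windows by powers \<open>r \<ge> 1\<close>.\<close>
lemma sin_power_bound:
  fixes r \<mu> c R :: real
  assumes r: "1 \<le> r" and \<mu>: "0 < \<mu>" "\<mu> < c" and rc: "r * c \<le> pi"
    and R: "0 < R" "sin c < R * sin \<mu>"
  shows "sin (r * c) < R powr r * sin (r * \<mu>)"
proof -
  have c_le: "c \<le> r * c" using r \<mu> by (simp add: mult_le_cancel_right1)
  have "r * \<mu> < r * c" using r \<mu> by simp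
  moreover have "0 < r * \<mu>" using r \<mu> by simp
  ultimately have "0 < r * \<mu>" "r * \<mu> < pi" "\<mu> < pi" using \<mu> c_le rc by linarith+
  then have pos: "0 < sin \<mu>" "0 < sin (r * \<mu>)" using \<mu> by (simp_all add: sin_gt_zero)
  have c_pi: "c \<le> pi" using c_le rc by linarith
  then have "0 \<le> sin c" using \<mu> by (intro sin_ge_zero) auto
  then consider "sin c = 0" | "0 < sin c" by linarith
  then show ?thesis
  proof cases
    case 1
    then have "c = pi" using \<mu> c_pi sin_gt_zero[of c] by (cases "c < pi") auto
    then have "sin (r * c) = 0" using rc r by simp
    then show ?thesis using R pos by simp
  next
    case 2
    have "sin c / sin \<mu> < R" using R pos by (simp add: field_simps)
    then have "(sin c / sin \<mu>) powr r < R powr r"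
      using 2 pos r by (intro powr_less_mono2) auto
    then have "sin c powr r < R powr r * sin \<mu> powr r"
      using 2 pos by (simp add: powr_divide field_simps)
    then have "sin c powr r * sin (r * \<mu>) < R powr r * sin (r * \<mu>) * sin \<mu> powr r"
      using pos by (simp add: algebra_simps)
    moreover have "sin (r * c) * sin \<mu> powr r \<le> sin (r * \<mu>) * sin c powr r"
      using sin_power_ratio_antitone[OF r \<mu> rc] .
    ultimately have "sin (r * c) * sin \<mu> powr r < (R powr r * sin (r * \<mu>)) * sin \<mu> powr r"
      by (simp add: algebra_simps)
    then show ?thesis using pos by simp
  qed
qed

lemma Im_exp_cis: "Im (exp l * cis t) = exp (Re l) * sin (Im l + t)"
  by (simp add: Re_exp Im_exp sin_add algebra_simps)

lemma exp_polar_cis: "exp L = of_real (exp (Re L)) * cis (Im L)"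
  using exp_eq_polar[of L] by simp

lemma Im_Ln_pos: "0 < Im z \<Longrightarrow> 0 < Im (Ln z) \<and> Im (Ln z) < pi"
  by (metis Arg_eq_Im_Ln Arg_lt_pi complex.sel(2) zero_complex.sel(2) less_irrefl)

lemma Im_Ln_neg: "Im z < 0 \<Longrightarrow> -pi < Im (Ln z) \<and> Im (Ln z) < 0"
  by (metis Arg_eq_Im_Ln Arg_neg_iff mpi_less_Arg complex.sel(2) zero_complex.sel(2) less_irrefl)

lemma powr_exp:
  assumes "-pi < Im m" "Im m \<le> pi"
  shows "exp m powr of_real p = exp (of_real p * m)"
  using assms by (simp add: powr_def)

lemma powr_polar:
  fixes R \<theta> p :: real
  assumes "0 < R" "-pi < \<theta>" "\<theta> \<le> pi"
  shows "(of_real R * cis \<theta>) powr of_real p = of_real (R powr p) * cis (p * \<theta>)"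
proof -
  have polar: "of_real R * cis \<theta> = exp (of_real (ln R) + \<i> * of_real \<theta>)"
    using assms by (simp add: exp_add cis_conv_exp exp_of_real)
  have "(of_real R * cis \<theta>) powr of_real p = exp (of_real (p * ln R) + \<i> * of_real (p * \<theta>))"
    unfolding polar using assms by (subst powr_exp) (simp_all add: algebra_simps)
  also have "\<dots> = of_real (R powr p) * cis (p * \<theta>)"
    using assms by (simp add: exp_add cis_conv_exp powr_def flip: exp_of_real)
  finally show ?thesis .
qed

text \<open>The exponential is injective on every horizontal strip of height at most \<open>2 pi\<close>;
  stated after rescaling by \<open>c > 0\<close>, which is how each step of the inverse map is undone.\<close>
lemma exp_mult_of_real_inj:
  fixes c a b :: real and x y :: complex
  assumes c: "0 < c" "c * (b - a) \<le> 2 * pi"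
    and strip: "a < Im x" "Im x < b" "a < Im y" "Im y < b"
    and eq: "exp (of_real c * x) = exp (of_real c * y)"
  shows "x = y"
proof -
  have "\<bar>Im x - Im y\<bar> < b - a" using strip by (simp add: abs_less_iff)
  then have "c * \<bar>Im x - Im y\<bar> < 2 * pi" using c by (meson mult_strict_left_mono order_less_le_trans)
  then have "\<bar>Im (of_real c * x) - Im (of_real c * y)\<bar> < 2 * pi"
    using c by (simp add: right_diff_distrib[symmetric] abs_mult)
  then have "of_real c * x = of_real c * y" using eq by (rule exp_complex_eqI)
  then show ?thesis using c by simp
qed

lemma exp_notin_nonpos:
  assumes "-pi < Im l" "Im l < pi"
  shows "exp l \<notin> \<real>\<^sub>\<le>\<^sub>0"
proof
  assume "exp l \<in> \<real>\<^sub>\<le>\<^sub>0"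
  then have "Re (exp l) < 0" "Im (exp l) = 0"
    by (auto simp: complex_nonpos_Reals_iff)
       (metis complex_eq_iff exp_not_eq_zero order_le_less zero_complex.sel)
  then have "Im (Ln (exp l)) = pi" by (subst Im_Ln_eq_pi) auto
  moreover have "Ln (exp l) = l" using assms by (intro Ln_exp) auto
  ultimately show False using assms by simp
qed

lemma log1_exp:
  assumes "0 < Im l" "Im l < 2 * pi"
  shows "log1 (exp l) = l"
proof -
  have "arg1 (exp l) = Im l"
  proof (cases "Im l \<le> pi")
    case True
    then have "Ln (exp l) = l" using assms by (intro Ln_exp) auto
    then have "Arg (exp l) = Im l" by (metis Arg_eq_Im_Ln exp_not_eq_zero)
    then show ?thesis using assms unfolding arg1_def by auto
  next
    case False
    define l' where "l' = l - 2 * pi * \<i>"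
    have "exp l' = exp l" unfolding l'_def by (simp add: exp_diff exp_two_pi_i')
    moreover have "Ln (exp l') = l'" using assms False by (intro Ln_exp) (auto simp: l'_def)
    moreover have "Im l' = Im l - 2 * pi" by (simp add: l'_def)
    ultimately have "Arg (exp l) = Im l - 2 * pi" by (metis Arg_eq_Im_Ln exp_not_eq_zero)
    then show ?thesis using assms unfolding arg1_def by auto
  qed
  then show ?thesis unfolding log1_def by (simp add: complex_eq_iff)
qed

lemma pow1_exp:
  assumes "0 < Im l" "Im l < 2 * pi"
  shows "pow1 (exp l) p = exp (of_real p * l)"
  using log1_exp[OF assms] unfolding pow1_def by simp

text \<open>\<open>arg_in z a b\<close>: the number \<open>z\<close> has a logarithm whose imaginary part lies in \<open>(a, b)\<close>,
  i.e. \<open>z\<close> lies in the open sector of angles \<open>(a, b)\<close> (without reducing angles modulo \<open>2 pi\<close>).\<close>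
definition arg_in :: "complex \<Rightarrow> real \<Rightarrow> real \<Rightarrow> bool" where
  "arg_in z a b \<longleftrightarrow> (\<exists>l. z = exp l \<and> a < Im l \<and> Im l < b)"

lemma arg_in_mono: "arg_in z a b \<Longrightarrow> a' \<le> a \<Longrightarrow> b \<le> b' \<Longrightarrow> arg_in z a' b'"
  unfolding arg_in_def by force

lemma arg_in_polar: "0 < R \<Longrightarrow> a < \<theta> \<Longrightarrow> \<theta> < b \<Longrightarrow> arg_in (of_real R * cis \<theta>) a b"
  unfolding arg_in_def
  by (intro exI[of _ "of_real (ln R) + \<i> * of_real \<theta>"]) (simp add: exp_add cis_conv_exp exp_of_real)

lemma arg_in_cnj:
  assumes "arg_in z a b" shows "arg_in (cnj z) (-b) (-a)"
proof -
  obtain l where "z = exp l" "a < Im l" "Im l < b" using assms unfolding arg_in_def by blast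
  then show ?thesis unfolding arg_in_def by (intro exI[of _ "cnj l"]) (simp add: exp_cnj)
qed

lemma arg_in_shift:
  assumes "arg_in z a b" shows "arg_in z (a + 2 * pi) (b + 2 * pi)"
proof -
  obtain l where "z = exp l" "a < Im l" "Im l < b" using assms unfolding arg_in_def by blast
  then show ?thesis unfolding arg_in_def
    by (intro exI[of _ "l + 2 * pi * \<i>"]) (simp add: exp_add exp_two_pi_i')
qed

lemma one_minus_polar:
  fixes \<rho> \<psi> :: real
  assumes \<rho>: "0 < \<rho>" and \<psi>: "0 < \<psi>" "\<psi> < pi"
  obtains R \<eta> where "1 - of_real \<rho> * cis \<psi> = of_real R * cis (-\<eta>)" "0 < R" "0 < \<eta>" "\<eta> < pi - \<psi>"
    "\<And>t. R * sin (t - \<eta>) = sin t + \<rho> * sin (\<psi> + t - pi)"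
proof -
  define Y where "Y = 1 - of_real \<rho> * cis \<psi>"
  have "Im Y < 0" using \<rho> \<psi> sin_gt_zero[of \<psi>] by (simp add: Y_def)
  then have Y0: "Y \<noteq> 0" and ImL: "-pi < Im (Ln Y)" "Im (Ln Y) < 0" using Im_Ln_neg by auto
  define R where "R = exp (Re (Ln Y))"
  define \<eta> where "\<eta> = - Im (Ln Y)"
  have R: "0 < R" by (simp add: R_def)
  have Y: "Y = of_real R * cis (-\<eta>)"
    using exp_polar_cis[of "Ln Y"] Y0 by (simp add: R_def \<eta>_def)
  have rot: "R * sin (t - \<eta>) = sin t + \<rho> * sin (\<psi> + t - pi)" for t
  proof -
    have "Im (Y * cis t) = R * sin (t - \<eta>)" by (simp add: Y sin_diff algebra_simps)
    moreover have "Im (Y * cis t) = sin t + \<rho> * sin (\<psi> + t - pi)"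
      by (simp add: Y_def algebra_simps sin_diff sin_add)
    ultimately show ?thesis by simp
  qed
  have "0 < R * sin (pi - \<psi> - \<eta>)" using rot[of "pi - \<psi>"] \<psi> sin_gt_zero[of \<psi>] by simp
  then have "0 < sin (pi - \<psi> - \<eta>)" using R by (simp add: zero_less_mult_iff)
  then have "\<eta> < pi - \<psi>" using sin_pos_iff[of "pi - \<psi> - \<eta>"] ImL \<psi> by (simp add: \<eta>_def)
  then show ?thesis using that[of R \<eta>] Y R rot ImL by (simp add: Y_def \<eta>_def)
qed

lemma arg_in_one_plus_rotation:
  fixes A B d :: real
  assumes "0 < A" "0 < B" "0 < d" "d < pi"
  shows "arg_in (of_real A + of_real B * cis d) 0 d"
proof -
  define z where "z = of_real A + of_real B * cis d"
  have "0 < Im z" using assms sin_gt_zero[of d] by (simp add: z_def)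
  then have z0: "z \<noteq> 0" and l: "0 < Im (Ln z)" "Im (Ln z) < pi" using Im_Ln_pos by auto
  have "z * cis (-d) = of_real A * cis (-d) + of_real B"
    by (simp add: z_def distrib_right mult.assoc cis_mult)
  then have "Im (exp (Ln z) * cis (-d)) < 0"
    using assms sin_gt_zero[of d] z0 by simp
  then have "exp (Re (Ln z)) * sin (Im (Ln z) + - d) < 0" by (simp only: Im_exp_cis)
  then have "sin (Im (Ln z) - d) < 0" by (simp add: mult_less_0_iff)
  then have "Im (Ln z) < d" using sin_neg_iff[of "Im (Ln z) - d"] l assms by simp
  then show ?thesis using z0 l unfolding arg_in_def z_def[symmetric] by (intro exI[of _ "Ln z"]) simp
qed

lemma arg_in_one_minus:
  assumes ab: "0 \<le> a" "a \<le> pi" "pi \<le> b" "b \<le> 2 * pi" and V: "arg_in V a b"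
  shows "arg_in (1 - V) (a - pi) (b - pi)"
proof -
  obtain L where L: "V = exp L" "a < Im L" "Im L < b" using V unfolding arg_in_def by blast
  define \<rho> where "\<rho> = exp (Re L)"
  define \<psi> where "\<psi> = Im L"
  have \<rho>: "0 < \<rho>" by (simp add: \<rho>_def)
  have V_polar: "V = of_real \<rho> * cis \<psi>" using L(1) by (simp add: \<rho>_def \<psi>_def exp_polar_cis)
  have \<psi>_bounds: "0 < \<psi>" "\<psi> < 2 * pi" using L ab by (auto simp: \<psi>_def)
  consider "\<psi> < pi" | "\<psi> = pi" | "pi < \<psi>" by linarith
  then show ?thesis
  proof cases
    case 1
    obtain R \<eta> where Y: "1 - V = of_real R * cis (-\<eta>)" and "0 < R" "0 < \<eta>" "\<eta> < pi - \<psi>"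
      using one_minus_polar[OF \<rho> \<psi>_bounds(1) 1] unfolding V_polar by blast
    then show ?thesis unfolding Y using ab L by (intro arg_in_polar) (auto simp: \<psi>_def)
  next
    case 2
    have Y: "1 - V = of_real (1 + \<rho>) * cis 0" using 2 by (simp add: V_polar)
    show ?thesis unfolding Y using 2 L \<rho> by (intro arg_in_polar) (auto simp: \<psi>_def)
  next
    case 3
    have V_cnj: "cnj V = of_real \<rho> * cis (2 * pi - \<psi>)"
      by (simp add: V_polar complex_eq_iff cos_diff sin_diff)
    obtain R \<eta> where "1 - cnj V = of_real R * cis (-\<eta>)" "0 < R" "0 < \<eta>" "\<eta> < \<psi> - pi"
    proof (rule one_minus_polar[OF \<rho>, of "2 * pi - \<psi>"])
      show "0 < 2 * pi - \<psi>" "2 * pi - \<psi> < pi" using 3 \<psi>_bounds by auto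
    qed (auto simp: V_cnj)
    then have Y: "1 - V = of_real R * cis \<eta>" and "0 < R" "0 < \<eta>" "\<eta> < \<psi> - pi"
      by (auto simp: complex_eq_iff)
    then show ?thesis unfolding Y using ab L by (intro arg_in_polar) (auto simp: \<psi>_def)
  qed
qed

lemma fractional_power_upper_window:
  fixes \<beta> \<rho> \<psi> a :: real
  assumes \<beta>: "0 < \<beta>" "\<beta> \<le> 1" and \<rho>: "0 < \<rho>" and \<psi>: "0 < \<psi>" "\<psi> < pi" "a < \<psi>"
  shows "arg_in (1 - (1 - of_real \<rho> * cis \<psi>) powr of_real \<beta>) a pi"
proof -
  obtain R \<eta> where Y: "1 - of_real \<rho> * cis \<psi> = of_real R * cis (-\<eta>)" and R: "0 < R"
    and \<eta>: "0 < \<eta>" "\<eta> < pi - \<psi>"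
    using one_minus_polar[OF \<rho> \<psi>(1,2)] by blast
  define e where "e = R powr \<beta>"
  define T where "T = 1 - of_real e * cis (-(\<beta> * \<eta>))"
  have T_eq: "1 - (1 - of_real \<rho> * cis \<psi>) powr of_real \<beta> = T"
    unfolding Y T_def e_def using R \<eta> \<psi> by (subst powr_polar) auto
  have "\<beta> * \<eta> \<le> \<eta>" using \<beta> \<eta> by (simp add: mult_le_cancel_right1)
  then have "\<beta> * \<eta> < pi" using \<eta> \<psi> by linarith
  then have "0 < sin (\<beta> * \<eta>)" using \<beta> \<eta> by (intro sin_gt_zero) auto
  then have "0 < Im T" using R by (simp add: T_def e_def)
  then have T0: "T \<noteq> 0" and l: "0 < Im (Ln T)" "Im (Ln T) < pi" using Im_Ln_pos by auto
  text \<open>The argument of \<open>T\<close> is at least \<open>\<psi>\<close>: \<open>T\<close> times the conjugate of \<open>\<rho> cis \<psi>\<close> lies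
    in the closed upper half plane, by the concavity estimate for the sine.\<close>
  have conj_V: "1 - of_real R * cis \<eta> = of_real \<rho> * cis (-\<psi>)"
    using arg_cong[OF Y, of cnj] by (simp add: cis_cnj eq_diff_eq diff_eq_eq add.commute)
  have "Im (T * (1 - of_real R * cis \<eta>))
      = e * sin (\<beta> * \<eta>) + e * R * sin ((1 - \<beta>) * \<eta>) - R * sin \<eta>"
    by (simp add: T_def algebra_simps sin_diff cos_diff left_diff_distrib)
  also have "\<dots> \<ge> 0"
    using sin_young_bound[OF R \<beta>, of \<eta>] \<eta> \<psi> by (simp add: e_def)
  also have "T * (1 - of_real R * cis \<eta>) = of_real \<rho> * (exp (Ln T) * cis (-\<psi>))"
    using T0 by (simp add: conj_V)
  also have "Im (of_real \<rho> * (exp (Ln T) * cis (-\<psi>))) = \<rho> * Im (exp (Ln T) * cis (-\<psi>))"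
    by simp
  also have "Im (exp (Ln T) * cis (-\<psi>)) = exp (Re (Ln T)) * sin (Im (Ln T) + -\<psi>)"
    by (rule Im_exp_cis)
  finally have "0 \<le> sin (Im (Ln T) - \<psi>)"
    using \<rho> by (simp add: zero_le_mult_iff)
  then have "\<psi> \<le> Im (Ln T)"
    using sin_neg_iff[of "Im (Ln T) - \<psi>"] l \<psi> by linarith
  then show ?thesis using T_eq T0 l \<psi> unfolding arg_in_def by (intro exI[of _ "Ln T"]) simp
qed

text \<open>The lower angle bound used for powers \<open>r \<ge> 1\<close>: under the sine estimate
  \<open>sin c < R sin (c - \<eta>)\<close>, rotating \<open>1 + R^r cis (pi - r \<eta>)\<close> by \<open>r c - pi\<close> lands in the upper
  half plane.\<close>
lemma one_plus_rotation_lower_bound: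
  fixes r c \<eta> R :: real
  assumes r: "1 \<le> r" and rc: "r * c \<le> pi" and \<eta>: "0 < \<eta>" "\<eta> < c"
    and R: "0 < R" "sin c < R * sin (c - \<eta>)"
  shows "arg_in (1 + of_real (R powr r) * cis (pi - r * \<eta>)) (pi - r * c) (pi - r * \<eta>)"
proof -
  have "r * \<eta> < r * c" "0 < r * \<eta>" using \<eta> r by simp_all
  then obtain l where l: "1 + of_real (R powr r) * cis (pi - r * \<eta>) = exp l"
      "0 < Im l" "Im l < pi - r * \<eta>"
    using arg_in_one_plus_rotation[of 1 "R powr r" "pi - r * \<eta>"] R rc unfolding arg_in_def by auto
  have "r * (c - \<eta>) = r * c - r * \<eta>" by (simp add: algebra_simps)
  then have sine_estimate: "sin (r * c) < R powr r * sin (r * (c - \<eta>))"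
    using sin_power_bound[OF r _ _ rc R] \<eta> by simp
  have "exp l * cis (r * c - pi) = of_real (R powr r) * cis (r * (c - \<eta>)) - cis (r * c)"
    unfolding l(1)[symmetric] by (simp add: algebra_simps cis_mult complex_eq_iff cos_diff sin_diff)
  then have "0 < Im (exp l * cis (r * c - pi))" using sine_estimate by simp
  then have "0 < sin (Im l + (r * c - pi))" by (simp only: Im_exp_cis zero_less_mult_iff) simp
  then have "pi - r * c < Im l"
    using sin_pos_iff[of "Im l + (r * c - pi)"] l rc \<open>r * \<eta> < r * c\<close> \<open>0 < r * \<eta>\<close> by linarith
  then show ?thesis unfolding arg_in_def using l by auto
qed

lemma one_minus_power_polar:
  fixes R \<eta> r :: real
  assumes "0 < R" "0 < \<eta>" "\<eta> < pi"
  shows "1 - (of_real R * cis (-\<eta>)) powr of_real r = 1 + of_real (R powr r) * cis (pi - r * \<eta>)"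
proof -
  have "(of_real R * cis (-\<eta>)) powr of_real r = of_real (R powr r) * cis (- (r * \<eta>))"
    using assms by (subst powr_polar) auto
  moreover have "cis (- (r * \<eta>)) = - cis (pi - r * \<eta>)"
    by (simp add: complex_eq_iff cos_diff sin_diff)
  ultimately show ?thesis by simp
qed

lemma power_upper_window:
  fixes r c \<rho> \<psi> :: real
  assumes r: "1 \<le> r" and c: "c \<le> pi" "r * c \<le> 2 * pi" and \<rho>: "0 < \<rho>"
    and \<psi>: "pi - c < \<psi>" "\<psi> < pi"
  shows "arg_in (1 - (1 - of_real \<rho> * cis \<psi>) powr of_real r) (pi - r * c) pi"
proof -
  have "0 < \<psi>" using \<psi> c by linarith
  obtain R \<eta> where Y: "1 - of_real \<rho> * cis \<psi> = of_real R * cis (-\<eta>)" and R: "0 < R"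
    and \<eta>: "0 < \<eta>" "\<eta> < pi - \<psi>" and rot: "\<And>t. R * sin (t - \<eta>) = sin t + \<rho> * sin (\<psi> + t - pi)"
    using one_minus_polar[OF \<rho> \<open>0 < \<psi>\<close> \<psi>(2)] by blast
  have \<eta>_c: "\<eta> < c" using \<eta> \<psi> by linarith
  have "0 < sin (\<psi> + c - pi)" using \<psi> c by (intro sin_gt_zero) auto
  then have c_ineq: "sin c < R * sin (c - \<eta>)" using rot[of c] \<rho> by (simp add: mult_pos_neg)
  define \<delta> where "\<delta> = pi - r * \<eta>"
  have "r * \<eta> < r * c" "0 < r * \<eta>" using \<eta> \<eta>_c r by simp_all
  then have \<delta>: "pi - r * c < \<delta>" "-pi < \<delta>" "\<delta> < pi" using c by (auto simp: \<delta>_def)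
  have T_eq: "1 - (1 - of_real \<rho> * cis \<psi>) powr of_real r = 1 + of_real (R powr r) * cis \<delta>"
    unfolding Y \<delta>_def using one_minus_power_polar[OF R \<eta>(1)] \<eta> \<open>0 < \<psi>\<close> by simp
  consider "0 < \<delta>" | "\<delta> = 0" | "\<delta> < 0" by linarith
  then show ?thesis
  proof cases
    case 1
    have "arg_in (1 + of_real (R powr r) * cis \<delta>) (pi - r * c) \<delta>"
    proof (cases "pi < r * c")
      case True
      have "arg_in (1 + of_real (R powr r) * cis \<delta>) 0 \<delta>"
        using arg_in_one_plus_rotation[of 1 "R powr r" \<delta>] 1 \<delta> R by simp
      then show ?thesis using True by (elim arg_in_mono) auto
    next
      case False
      then show ?thesis
        unfolding \<delta>_def using one_plus_rotation_lower_bound[OF r _ \<eta>(1) \<eta>_c R c_ineq] by simp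
    qed
    then show ?thesis unfolding T_eq using \<delta> by (elim arg_in_mono) auto
  next
    case 2
    have "pi - r * c < 0" using 2 \<delta> by simp
    moreover have real: "1 + of_real (R powr r) * cis \<delta> = of_real (1 + R powr r) * cis 0"
      using 2 by simp
    ultimately show ?thesis unfolding T_eq real by (intro arg_in_polar) (auto intro: add_pos_nonneg)
  next
    case 3
    have "arg_in (1 + of_real (R powr r) * cis (-\<delta>)) 0 (-\<delta>)"
      using arg_in_one_plus_rotation[of 1 "R powr r" "-\<delta>"] 3 \<delta> R by auto
    from arg_in_cnj[OF this] have "arg_in (1 + of_real (R powr r) * cis \<delta>) \<delta> 0"
      by (simp add: cis_cnj)
    then show ?thesis unfolding T_eq using \<delta> by (elim arg_in_mono) auto
  qed
qed

text \<open>Both window estimates extend from the upper half plane to a full window \<open>(a, b)\<close> around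
  \<open>pi\<close> by conjugation symmetry: an estimate in the upper half plane with stretching factor \<open>K\<close>
  yields the window \<open>(pi - K (pi - a), pi + K (b - pi))\<close>.\<close>
lemma one_minus_power_window:
  fixes p K a b :: real and V :: complex
  assumes upper: "\<And>c \<rho> \<psi>. 0 < c \<Longrightarrow> c \<le> pi \<Longrightarrow> K * c \<le> 2 * pi \<Longrightarrow> 0 < \<rho> \<Longrightarrow>
       pi - c < \<psi> \<Longrightarrow> \<psi> < pi \<Longrightarrow>
       arg_in (1 - (1 - of_real \<rho> * cis \<psi>) powr of_real p) (pi - K * c) pi"
    and p: "0 < p" and K: "0 < K"
    and ab: "0 \<le> a" "a \<le> pi" "pi \<le> b" "b \<le> 2 * pi" "K * (b - a) \<le> 2 * pi"
    and V: "arg_in V a b"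
  shows "arg_in (1 - (1 - V) powr of_real p) (pi - K * (pi - a)) (pi + K * (b - pi))"
proof -
  obtain L where L: "V = exp L" "a < Im L" "Im L < b" using V unfolding arg_in_def by blast
  define \<rho> where "\<rho> = exp (Re L)"
  define \<psi> where "\<psi> = Im L"
  have \<rho>: "0 < \<rho>" by (simp add: \<rho>_def)
  have V_polar: "V = of_real \<rho> * cis \<psi>" using L(1) by (simp add: \<rho>_def \<psi>_def exp_polar_cis)
  have \<psi>: "a < \<psi>" "\<psi> < b" using L by (simp_all add: \<psi>_def)
  have K_mono: "K * c \<le> 2 * pi" if "0 \<le> c" "c \<le> b - a" for c
  proof -
    have "K * c \<le> K * (b - a)" using that K by (intro mult_left_mono) auto
    then show ?thesis using ab by linarith
  qed
  consider "\<psi> < pi" | "\<psi> = pi" | "pi < \<psi>" by linarith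
  then show ?thesis
  proof cases
    case 1
    have "arg_in (1 - (1 - V) powr of_real p) (pi - K * (pi - a)) pi"
      unfolding V_polar using 1 \<psi> ab \<rho> K_mono[of "pi - a"] by (intro upper) auto
    then show ?thesis using K ab by (elim arg_in_mono) auto
  next
    case 2
    have "1 < (1 + \<rho>) powr p" using \<rho> p by simp
    moreover have "(1 - V) powr of_real p = of_real ((1 + \<rho>) powr p)"
      using 2 \<rho> powr_of_real[of "1 + \<rho>" p] by (simp add: V_polar)
    then have "1 - (1 - V) powr of_real p = of_real ((1 + \<rho>) powr p - 1) * cis pi" by simp
    moreover have "pi - K * (pi - a) < pi" "pi < pi + K * (b - pi)" using 2 \<psi> K by auto
    ultimately show ?thesis by (metis arg_in_polar diff_gt_0_iff_gt)
  next
    case 3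
    have V_cnj: "cnj V = of_real \<rho> * cis (2 * pi - \<psi>)"
      by (simp add: V_polar complex_eq_iff cos_diff sin_diff)
    have "arg_in (1 - (1 - cnj V) powr of_real p) (pi - K * (b - pi)) pi"
      unfolding V_cnj using 3 \<psi> ab \<rho> K_mono[of "b - pi"] by (intro upper) auto
    moreover have "Im (1 - V) \<noteq> 0" using 3 \<psi> ab \<rho> sin_gt_zero[of "\<psi> - pi"]
      by (simp add: V_polar sin_diff)
    then have "cnj (1 - (1 - cnj V) powr of_real p) = 1 - (1 - V) powr of_real p"
      using cnj_powr[of "1 - cnj V" "of_real p"] by simp
    ultimately have "arg_in (1 - (1 - V) powr of_real p) (- pi) (K * (b - pi) - pi)"
      by (metis arg_in_cnj minus_diff_eq)
    from arg_in_shift[OF this] show ?thesis using K ab by (elim arg_in_mono) auto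
  qed
qed

lemma arg_in_fractional_power:
  fixes \<beta> a b :: real
  assumes \<beta>: "0 < \<beta>" "\<beta> \<le> 1" and ab: "0 \<le> a" "a \<le> pi" "pi \<le> b" "b \<le> 2 * pi"
    and V: "arg_in V a b"
  shows "arg_in (1 - (1 - V) powr of_real \<beta>) a b"
proof -
  have "arg_in (1 - (1 - V) powr of_real \<beta>) (pi - 1 * (pi - a)) (pi + 1 * (b - pi))"
  proof (rule one_minus_power_window[OF _ \<beta>(1) _ ab _ V])
    show "arg_in (1 - (1 - of_real \<rho> * cis \<psi>) powr of_real \<beta>) (pi - 1 * c) pi"
      if "0 < c" "c \<le> pi" "0 < \<rho>" "pi - c < \<psi>" "\<psi> < pi" for c \<rho> \<psi>
      using that by (intro fractional_power_upper_window \<beta>) auto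
  qed (use ab in auto)
  then show ?thesis by simp
qed

lemma arg_in_power:
  fixes r a b :: real
  assumes r: "1 \<le> r" and ab: "0 \<le> a" "a \<le> pi" "pi \<le> b" "b \<le> 2 * pi" "r * (b - a) \<le> 2 * pi"
    and V: "arg_in V a b"
  shows "arg_in (1 - (1 - V) powr of_real r) (pi - r * (pi - a)) (pi + r * (b - pi))"
  using r ab V by (intro one_minus_power_window[of r r] power_upper_window) auto

lemma Im_minus_inverse_pos:
  assumes "0 < Im z" shows "0 < Im (-1 / z)"
proof -
  have "0 < Re z * Re z + Im z * Im z" using assms by (simp add: add_nonneg_pos)
  then show ?thesis using assms by (simp add: Im_divide power2_eq_square)
qed

text \<open>With \<open>V = s (-1/w)^\<alpha> / r\<close>, the quantity
  \<open>inv_core w = (1 - (1 - V)^r) / s\<close> plays the role of \<open>u^\<alpha>\<close> for \<open>u = -1/z\<close>; its argument window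
  has width \<open>r \<alpha> pi \<le> 2 pi\<close> and centre \<open>inv_rotation\<close>, so the \<open>1/\<alpha>\<close>-th root is taken with the
  principal logarithm after rotating this centre to \<open>0\<close>.\<close>
definition inv_rotation :: "real \<Rightarrow> complex \<Rightarrow> real \<Rightarrow> real" where
  "inv_rotation \<alpha> s r = pi - Arg s + r * (Arg s + \<alpha> * pi / 2 - pi)"

definition inv_core :: "real \<Rightarrow> complex \<Rightarrow> real \<Rightarrow> complex \<Rightarrow> complex" where
  "inv_core \<alpha> s r w = (1 - (1 - s * exp (of_real \<alpha> * Ln (-1 / w)) / of_real r) powr of_real r) / s"

definition F_inv :: "real \<Rightarrow> complex \<Rightarrow> real \<Rightarrow> complex \<Rightarrow> complex" where
  "F_inv \<alpha> s r w = -1 / exp ((Ln (exp (- (\<i> * of_real (inv_rotation \<alpha> s r))) * inv_core \<alpha> s r w)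
      + \<i> * of_real (inv_rotation \<alpha> s r)) / of_real \<alpha>)"

lemma inv_core_eq:
  assumes s: "s \<noteq> 0"
    and m: "1 - s * exp (of_real \<alpha> * Ln (-1 / w)) / of_real r = exp m" "-pi < Im m" "Im m \<le> pi"
    and l: "1 - exp (of_real r * m) = exp l"
  shows "inv_core \<alpha> s r w = exp (l - Ln s)"
  unfolding inv_core_def m(1) powr_exp[OF m(2,3)] l using s by (simp add: exp_diff)

text \<open>The standing hypotheses: the window \<open>(Arg s, Arg s + \<alpha> pi)\<close> contains \<open>pi\<close> and lies in
  \<open>[0, 2 pi]\<close> (admissibility), and \<open>1 \<le> r\<close>, \<open>r \<alpha> \<le> 2\<close>, \<open>r \<le> 2\<close> (the range of the theorem).\<close>
locale inversion_window =
  fixes \<alpha> r :: real and s :: complex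
  assumes \<alpha>_pos: "0 < \<alpha>" and s_nonzero: "s \<noteq> 0"
    and window: "0 \<le> Arg s" "Arg s \<le> pi" "pi \<le> Arg s + \<alpha> * pi" "Arg s + \<alpha> * pi \<le> 2 * pi"
    and exponent: "1 \<le> r" "r * \<alpha> \<le> 2" "r \<le> 2"
begin

lemma Im_Ln_s: "Im (Ln s) = Arg s"
  using s_nonzero by (simp add: Arg_eq_Im_Ln)

lemma r_alpha_pi: "r * \<alpha> * pi \<le> 2 * pi"
  using mult_right_mono[OF exponent(2), of pi] by simp

lemma alpha_pi: "\<alpha> * pi \<le> 2 * pi"
  using window by linarith

lemma rotated_window:
  assumes "pi - r * (pi - Arg s) < t" "t < pi + r * (Arg s + \<alpha> * pi - pi)"
  shows "-pi < t - Arg s - inv_rotation \<alpha> s r" "t - Arg s - inv_rotation \<alpha> s r < pi"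
proof -
  have "Arg s + inv_rotation \<alpha> s r = pi + r * (Arg s - pi) + r * \<alpha> * pi / 2"
    "pi - r * (pi - Arg s) = pi + r * (Arg s - pi)"
    "pi + r * (Arg s + \<alpha> * pi - pi) = pi + r * (Arg s - pi) + r * \<alpha> * pi"
    by (simp_all add: inv_rotation_def algebra_simps)
  then show "-pi < t - Arg s - inv_rotation \<alpha> s r" "t - Arg s - inv_rotation \<alpha> s r < pi"
    using assms r_alpha_pi by linarith+
qed

lemma F_inv_eq:
  assumes core: "inv_core \<alpha> s r w = exp (l - Ln s)"
    and l: "pi - r * (pi - Arg s) < Im l" "Im l < pi + r * (Arg s + \<alpha> * pi - pi)"
  shows "F_inv \<alpha> s r w = -1 / exp ((l - Ln s) / of_real \<alpha>)"
proof -
  define \<kappa> where "\<kappa> = inv_rotation \<alpha> s r"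
  have "-pi < Im (l - Ln s - \<i> * of_real \<kappa>)" "Im (l - Ln s - \<i> * of_real \<kappa>) < pi"
    using rotated_window[OF l] by (simp_all add: Im_Ln_s \<kappa>_def)
  then have "Ln (exp (- (\<i> * of_real \<kappa>)) * inv_core \<alpha> s r w) = l - Ln s - \<i> * of_real \<kappa>"
    unfolding core by (simp add: exp_add[symmetric] algebra_simps)
  then show ?thesis by (simp add: F_inv_def \<kappa>_def[symmetric])
qed

lemma F_inv_log_form:
  assumes w: "0 < Im w"
  obtains m l where "1 - s * exp (of_real \<alpha> * Ln (-1 / w)) / of_real r = exp m"
    "Arg s - pi < Im m" "Im m < Arg s + \<alpha> * pi - pi"
    "1 - exp (of_real r * m) = exp l"
    "pi - r * (pi - Arg s) < Im l" "Im l < pi + r * (Arg s + \<alpha> * pi - pi)"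
    "inv_core \<alpha> s r w = exp (l - Ln s)"
    "F_inv \<alpha> s r w = -1 / exp ((l - Ln s) / of_real \<alpha>)"
proof -
  define LV where "LV = Ln s + of_real \<alpha> * Ln (-1 / w) - of_real (ln r)"
  have r: "0 < r" using exponent by simp
  have V: "s * exp (of_real \<alpha> * Ln (-1 / w)) / of_real r = exp LV"
    using s_nonzero r by (simp add: LV_def exp_add exp_diff exp_of_real)
  have "0 < Im (Ln (-1 / w))" "Im (Ln (-1 / w)) < pi"
    using Im_Ln_pos[OF Im_minus_inverse_pos[OF w]] by auto
  then have "Arg s < Im LV" "Im LV < Arg s + \<alpha> * pi"
    using \<alpha>_pos by (simp_all add: LV_def Im_Ln_s)
  then have V_arg: "arg_in (exp LV) (Arg s) (Arg s + \<alpha> * pi)"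
    unfolding arg_in_def by blast
  obtain m where m: "1 - exp LV = exp m" "Arg s - pi < Im m" "Im m < Arg s + \<alpha> * pi - pi"
    using arg_in_one_minus[OF window V_arg] unfolding arg_in_def by auto
  have "r * (Arg s + \<alpha> * pi - Arg s) \<le> 2 * pi" using r_alpha_pi by (simp add: mult.assoc)
  from arg_in_power[OF exponent(1) window this V_arg] obtain l
    where l: "1 - (1 - exp LV) powr of_real r = exp l"
      "pi - r * (pi - Arg s) < Im l" "Im l < pi + r * (Arg s + \<alpha> * pi - pi)"
    unfolding arg_in_def by auto
  have "(1 - exp LV) powr of_real r = exp (of_real r * m)"
    unfolding m(1) using m window by (intro powr_exp) auto
  then have l': "1 - exp (of_real r * m) = exp l" using l(1) by simp
  have m': "1 - s * exp (of_real \<alpha> * Ln (-1 / w)) / of_real r = exp m" using V m(1) by simp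
  have core: "inv_core \<alpha> s r w = exp (l - Ln s)"
    using inv_core_eq[OF s_nonzero m' _ _ l'] m window by simp
  show ?thesis using that[OF m' m(2,3) l' l(2,3) core F_inv_eq[OF core l(2,3)]] .
qed

text \<open>\<open>F_inv\<close> is holomorphic on the upper half plane, since all three logarithms in its formula
  are evaluated at points with an argument in \<open>(-pi, pi)\<close>.\<close>
lemma F_inv_holomorphic: "F_inv \<alpha> s r holomorphic_on upper_half"
proof -
  define \<kappa> where "\<kappa> = inv_rotation \<alpha> s r"
  have off_cut: "-1 / w \<notin> \<real>\<^sub>\<le>\<^sub>0"
      "1 - s * exp (of_real \<alpha> * Ln (-1 / w)) / of_real r \<notin> \<real>\<^sub>\<le>\<^sub>0"
      "exp (- (\<i> * of_real \<kappa>)) * inv_core \<alpha> s r w \<notin> \<real>\<^sub>\<le>\<^sub>0"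
    if "w \<in> upper_half" for w
  proof -
    have w: "0 < Im w" using that by (simp add: upper_half_def)
    show "-1 / w \<notin> \<real>\<^sub>\<le>\<^sub>0"
      using Im_minus_inverse_pos[OF w] by (auto simp: complex_nonpos_Reals_iff)
    obtain m l where m: "1 - s * exp (of_real \<alpha> * Ln (-1 / w)) / of_real r = exp m"
      "Arg s - pi < Im m" "Im m < Arg s + \<alpha> * pi - pi"
      and l: "pi - r * (pi - Arg s) < Im l" "Im l < pi + r * (Arg s + \<alpha> * pi - pi)"
      and core: "inv_core \<alpha> s r w = exp (l - Ln s)"
      using F_inv_log_form[OF w] by blast
    show "1 - s * exp (of_real \<alpha> * Ln (-1 / w)) / of_real r \<notin> \<real>\<^sub>\<le>\<^sub>0"
      unfolding m(1) using m window by (intro exp_notin_nonpos) auto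
    have "exp (- (\<i> * of_real \<kappa>)) * inv_core \<alpha> s r w = exp (l - Ln s - \<i> * of_real \<kappa>)"
      unfolding core by (simp add: exp_add[symmetric] algebra_simps)
    then show "exp (- (\<i> * of_real \<kappa>)) * inv_core \<alpha> s r w \<notin> \<real>\<^sub>\<le>\<^sub>0"
      using rotated_window[OF l] exp_notin_nonpos[of "l - Ln s - \<i> * of_real \<kappa>"]
      by (simp add: Im_Ln_s \<kappa>_def)
  qed
  have "(\<lambda>w. -1 / exp ((Ln (exp (- (\<i> * of_real \<kappa>)) *
      ((1 - (1 - s * exp (of_real \<alpha> * Ln (-1 / w)) / of_real r) powr of_real r) / s))
      + \<i> * of_real \<kappa>) / of_real \<alpha>)) holomorphic_on upper_half"
    using off_cut \<alpha>_pos s_nonzero exponent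
    by (intro holomorphic_intros) (auto simp: upper_half_def inv_core_def)
  then show ?thesis unfolding F_inv_def inv_core_def \<kappa>_def .
qed

text \<open>The point \<open>w\<close> is determined by \<open>V = s (-1/w)^\<alpha> / r\<close>, since \<open>Ln (-1/w)\<close> ranges over a strip of
  height \<open>pi\<close> and \<open>\<alpha> pi \<le> 2 pi\<close>.\<close>
lemma log_form_determines_point:
  assumes w: "0 < Im w1" "0 < Im w2"
    and V: "s * exp (of_real \<alpha> * Ln (-1 / w1)) / of_real r = s * exp (of_real \<alpha> * Ln (-1 / w2)) / of_real r"
  shows "w1 = w2"
proof -
  have "exp (of_real \<alpha> * Ln (-1 / w1)) = exp (of_real \<alpha> * Ln (-1 / w2))"
    using V s_nonzero exponent by simp
  moreover have "\<alpha> * (pi - 0) \<le> 2 * pi" using alpha_pi by simp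
  ultimately have "Ln (-1 / w1) = Ln (-1 / w2)"
    using \<alpha>_pos Im_Ln_pos[OF Im_minus_inverse_pos[OF w(1)]] Im_Ln_pos[OF Im_minus_inverse_pos[OF w(2)]]
      exp_mult_of_real_inj[of \<alpha> "pi" 0] by blast
  then have "exp (Ln (-1 / w1)) = exp (Ln (-1 / w2))" by simp
  moreover have "w1 \<noteq> 0" "w2 \<noteq> 0" using w by auto
  ultimately show "w1 = w2" by simp
qed

text \<open>Each step of the inverse map is undone on its argument window: the logarithms
  \<open>l\<close>, \<open>m\<close> and \<open>Ln (-1/w)\<close> range over strips of heights \<open>r \<alpha> pi\<close>, \<open>\<alpha> pi\<close> and \<open>pi\<close>, and
  after rescaling by \<open>1/\<alpha>\<close>, \<open>r\<close> and \<open>\<alpha>\<close> these heights are at most \<open>2 pi\<close>.\<close>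
lemma F_inv_inj: "inj_on (F_inv \<alpha> s r) upper_half"
proof (rule inj_onI)
  fix w1 w2 assume "w1 \<in> upper_half" "w2 \<in> upper_half"
    and eq: "F_inv \<alpha> s r w1 = F_inv \<alpha> s r w2"
  then have w: "0 < Im w1" "0 < Im w2" by (auto simp: upper_half_def)
  obtain m1 l1 where m1: "1 - s * exp (of_real \<alpha> * Ln (-1 / w1)) / of_real r = exp m1"
      "Arg s - pi < Im m1" "Im m1 < Arg s + \<alpha> * pi - pi"
    and l1: "1 - exp (of_real r * m1) = exp l1"
      "pi - r * (pi - Arg s) < Im l1" "Im l1 < pi + r * (Arg s + \<alpha> * pi - pi)"
    and F1: "F_inv \<alpha> s r w1 = -1 / exp ((l1 - Ln s) / of_real \<alpha>)"
    using F_inv_log_form[OF w(1)] by blast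
  obtain m2 l2 where m2: "1 - s * exp (of_real \<alpha> * Ln (-1 / w2)) / of_real r = exp m2"
      "Arg s - pi < Im m2" "Im m2 < Arg s + \<alpha> * pi - pi"
    and l2: "1 - exp (of_real r * m2) = exp l2"
      "pi - r * (pi - Arg s) < Im l2" "Im l2 < pi + r * (Arg s + \<alpha> * pi - pi)"
    and F2: "F_inv \<alpha> s r w2 = -1 / exp ((l2 - Ln s) / of_real \<alpha>)"
    using F_inv_log_form[OF w(2)] by blast
  have r: "0 < r" using exponent by simp
  have exp_eq: "exp (of_real (1 / \<alpha>) * (l1 - Ln s)) = exp (of_real (1 / \<alpha>) * (l2 - Ln s))"
    using eq F1 F2 by (simp add: divide_inverse mult.commute)
  have width: "1 / \<alpha> * ((pi + r * (Arg s + \<alpha> * pi - pi) - Arg s)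
      - (pi - r * (pi - Arg s) - Arg s)) \<le> 2 * pi"
    using \<alpha>_pos exponent(3) by (simp add: algebra_simps)
  have strip: "pi - r * (pi - Arg s) - Arg s < Im (l1 - Ln s)"
    "Im (l1 - Ln s) < pi + r * (Arg s + \<alpha> * pi - pi) - Arg s"
    "pi - r * (pi - Arg s) - Arg s < Im (l2 - Ln s)"
    "Im (l2 - Ln s) < pi + r * (Arg s + \<alpha> * pi - pi) - Arg s"
    using l1(2,3) l2(2,3) by (simp_all add: Im_Ln_s)
  have "l1 - Ln s = l2 - Ln s"
    using \<alpha>_pos by (intro exp_mult_of_real_inj[OF _ width strip exp_eq]) simp
  then have "l1 = l2" by simp
  have "exp (of_real r * m1) = 1 - exp l1" "exp (of_real r * m2) = 1 - exp l2"
    using l1(1) l2(1) by (simp_all add: algebra_simps)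
  then have "exp (of_real r * m1) = exp (of_real r * m2)" using \<open>l1 = l2\<close> by simp
  moreover have "r * ((Arg s + \<alpha> * pi - pi) - (Arg s - pi)) \<le> 2 * pi"
    using r_alpha_pi by (simp add: algebra_simps)
  ultimately have "m1 = m2" using r m1(2,3) m2(2,3) exp_mult_of_real_inj[of r] by blast
  have "s * exp (of_real \<alpha> * Ln (-1 / w1)) / of_real r = 1 - exp m1"
    "s * exp (of_real \<alpha> * Ln (-1 / w2)) / of_real r = 1 - exp m2"
    using m1(1) m2(1) by (simp_all add: algebra_simps)
  then show "w1 = w2" using log_form_determines_point[OF w] \<open>m1 = m2\<close> by simp
qed

lemma mu_G_log_form:
  assumes z: "0 < Im z"
  obtains m LT where "1 - s * exp (of_real \<alpha> * Ln (-1 / z)) = exp m"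
    "Arg s - pi < Im m" "Im m < Arg s + \<alpha> * pi - pi"
    "1 - exp (of_real (1 / r) * m) = exp LT" "Arg s < Im LT" "Im LT < Arg s + \<alpha> * pi"
    "mu_G \<alpha> s r z = - exp ((of_real (ln r) + LT - Ln s) / of_real \<alpha>)"
proof -
  define Lu where "Lu = Ln (-1 / z)"
  have u: "-1 / z = exp Lu" "0 < Im Lu" "Im Lu < pi"
  proof -
    have "z \<noteq> 0" using z by auto
    then show "-1 / z = exp Lu" by (simp add: Lu_def)
    show "0 < Im Lu" "Im Lu < pi" using Im_Ln_pos[OF Im_minus_inverse_pos[OF z]] by (auto simp: Lu_def)
  qed
  have W_arg: "arg_in (s * exp (of_real \<alpha> * Lu)) (Arg s) (Arg s + \<alpha> * pi)"
    unfolding arg_in_def using u \<alpha>_pos s_nonzero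
    by (intro exI[of _ "Ln s + of_real \<alpha> * Lu"]) (simp add: exp_add Im_Ln_s)
  obtain m where m: "1 - s * exp (of_real \<alpha> * Lu) = exp m" "Arg s - pi < Im m" "Im m < Arg s + \<alpha> * pi - pi"
    using arg_in_one_minus[OF window W_arg] unfolding arg_in_def by auto
  have "0 < 1 / r" "1 / r \<le> 1" using exponent by auto
  from arg_in_fractional_power[OF this window W_arg] obtain LT
    where LT: "1 - (1 - s * exp (of_real \<alpha> * Lu)) powr of_real (1 / r) = exp LT"
      "Arg s < Im LT" "Im LT < Arg s + \<alpha> * pi"
    unfolding arg_in_def by auto
  have "(1 - s * exp (of_real \<alpha> * Lu)) powr of_real (1 / r) = exp (of_real (1 / r) * m)"
    unfolding m(1) using m window by (intro powr_exp) auto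
  then have LT': "1 - exp (of_real (1 / r) * m) = exp LT" using LT(1) by simp
  text \<open>The quotient \<open>(1 - (1 - s u^\<alpha>)^(1/r)) / s\<close> has argument in \<open>(0, \<alpha> pi)\<close>, so its
    \<open>1/\<alpha>\<close>-th power is computed by the logarithm \<open>LT - Ln s\<close>.\<close>
  have "Im LT - Arg s < 2 * pi" using LT alpha_pi by linarith
  then have "pow1 (exp (LT - Ln s)) (1 / \<alpha>) = exp (of_real (1 / \<alpha>) * (LT - Ln s))"
    using LT by (intro pow1_exp) (simp_all add: Im_Ln_s)
  moreover have "complex_of_real (r powr (1 / \<alpha>)) = exp (of_real (ln r / \<alpha>))"
    using exponent by (simp add: powr_def flip: exp_of_real)
  moreover have "pow1 (-1 / z) \<alpha> = exp (of_real \<alpha> * Lu)"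
    unfolding u(1) using u alpha_pi \<alpha>_pos by (intro pow1_exp) auto
  ultimately have "mu_G \<alpha> s r z = - exp ((of_real (ln r) + LT - Ln s) / of_real \<alpha>)"
    unfolding mu_G_def using LT(1) s_nonzero
    by (simp add: exp_diff exp_add[symmetric] add_divide_distrib diff_divide_distrib)
  then show ?thesis using that m LT LT' by (simp add: Lu_def)
qed

text \<open>\<open>F_inv\<close> undoes \<open>F_\<mu> = 1/G\<close> by running the same chain of logarithms backwards.\<close>
lemma F_inv_left_inverse:
  assumes z: "0 < Im z"
  shows "F_inv \<alpha> s r (1 / mu_G \<alpha> s r z) = z"
proof -
  obtain m LT where m: "1 - s * exp (of_real \<alpha> * Ln (-1 / z)) = exp m"
      "Arg s - pi < Im m" "Im m < Arg s + \<alpha> * pi - pi"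
    and LT: "1 - exp (of_real (1 / r) * m) = exp LT" "Arg s < Im LT" "Im LT < Arg s + \<alpha> * pi"
    and G: "mu_G \<alpha> s r z = - exp ((of_real (ln r) + LT - Ln s) / of_real \<alpha>)"
    using mu_G_log_form[OF z] by blast
  have r: "0 < r" using exponent by simp
  define w where "w = 1 / mu_G \<alpha> s r z"
  define Lv where "Lv = (of_real (ln r) + LT - Ln s) / of_real \<alpha>"
  have "Im Lv = (Im LT - Arg s) / \<alpha>" by (simp add: Lv_def Im_Ln_s)
  moreover have "0 < Im LT - Arg s" "Im LT - Arg s < pi * \<alpha>"
    using LT(2,3) by (simp_all add: mult.commute)
  ultimately have "0 < Im Lv" "Im Lv < pi" using \<alpha>_pos by (simp_all add: pos_divide_less_eq)
  then have "Ln (-1 / w) = Lv" by (simp add: w_def G Lv_def[symmetric])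
  then have "s * exp (of_real \<alpha> * Ln (-1 / w)) / of_real r = exp LT"
    using \<alpha>_pos r s_nonzero by (simp add: Lv_def exp_add exp_diff exp_of_real)
  then have step1: "1 - s * exp (of_real \<alpha> * Ln (-1 / w)) / of_real r = exp (of_real (1 / r) * m)"
    using LT(1) by (simp add: algebra_simps)
  have "pi \<le> pi * r" using exponent(1) by simp
  then have "-pi * r < Im m" "Im m \<le> pi * r" using m(2,3) window by linarith+
  then have m_window: "-pi < Im (of_real (1 / r) * m)" "Im (of_real (1 / r) * m) \<le> pi"
    using r by (simp_all add: field_simps)
  define l where "l = Ln s + of_real \<alpha> * Ln (-1 / z)"
  have step2: "1 - exp (of_real r * (of_real (1 / r) * m)) = exp l"
    using m(1) r s_nonzero by (simp add: l_def exp_add algebra_simps)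
  have "0 < Im (Ln (-1 / z))" "Im (Ln (-1 / z)) < pi"
    using Im_Ln_pos[OF Im_minus_inverse_pos[OF z]] by auto
  then have "Arg s < Im l" "Im l < Arg s + \<alpha> * pi" using \<alpha>_pos by (simp_all add: l_def Im_Ln_s)
  moreover have "pi - r * (pi - Arg s) \<le> Arg s" "Arg s + \<alpha> * pi \<le> pi + r * (Arg s + \<alpha> * pi - pi)"
    using window mult_right_mono[OF exponent(1), of "pi - Arg s"]
      mult_right_mono[OF exponent(1), of "Arg s + \<alpha> * pi - pi"] by (simp_all add: algebra_simps)
  ultimately have l_window: "pi - r * (pi - Arg s) < Im l" "Im l < pi + r * (Arg s + \<alpha> * pi - pi)"
    by linarith+
  have "F_inv \<alpha> s r w = -1 / exp ((l - Ln s) / of_real \<alpha>)"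
    by (rule F_inv_eq[OF inv_core_eq[OF s_nonzero step1 m_window step2] l_window])
  also have "\<dots> = -1 / exp (Ln (-1 / z))" using \<alpha>_pos by (simp add: l_def)
  also have "\<dots> = z" using z by (subst exp_Ln) auto
  finally show ?thesis by (simp add: w_def)
qed

end

lemma admissible_window:
  assumes "admissible \<alpha> s"
  shows "0 \<le> Arg s" "Arg s \<le> pi" "pi \<le> Arg s + \<alpha> * pi" "Arg s + \<alpha> * pi \<le> 2 * pi"
proof -
  have "0 < \<alpha>" and "(\<alpha> \<le> 1 \<and> pi - \<alpha> * pi \<le> Arg s \<and> Arg s \<le> pi) \<or>
      (1 < \<alpha> \<and> 0 \<le> Arg s \<and> Arg s \<le> 2 * pi - \<alpha> * pi)"
    using assms unfolding admissible_def by (auto simp: algebra_simps)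
  moreover have "\<alpha> \<le> 1 \<Longrightarrow> \<alpha> * pi \<le> pi" "1 < \<alpha> \<Longrightarrow> pi \<le> \<alpha> * pi" by simp_all
  ultimately show "0 \<le> Arg s" "Arg s \<le> pi" "pi \<le> Arg s + \<alpha> * pi" "Arg s + \<alpha> * pi \<le> 2 * pi"
    using pi_gt_zero by (smt (verit) mult_pos_pos)+
qed

lemma exponent_range:
  fixes \<alpha> r :: real
  assumes "(0 < \<alpha> \<and> \<alpha> \<le> 1 \<and> 1 \<le> r \<and> r \<le> 2) \<or> (1 \<le> \<alpha> \<and> \<alpha> \<le> 2 \<and> 1 \<le> r \<and> r \<le> 2 / \<alpha>)"
  shows "1 \<le> r" "r * \<alpha> \<le> 2" "r \<le> 2"
proof -
  have "r * \<alpha> \<le> 2 \<and> r \<le> 2"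
    using assms
  proof
    assume h: "0 < \<alpha> \<and> \<alpha> \<le> 1 \<and> 1 \<le> r \<and> r \<le> 2"
    then have "r * \<alpha> \<le> r * 1" by (intro mult_left_mono) auto
    then show ?thesis using h by linarith
  next
    assume h: "1 \<le> \<alpha> \<and> \<alpha> \<le> 2 \<and> 1 \<le> r \<and> r \<le> 2 / \<alpha>"
    then have "r * \<alpha> \<le> 2" by (simp add: le_divide_eq)
    moreover have "r * 1 \<le> r * \<alpha>" using h by (intro mult_left_mono) auto
    ultimately show ?thesis by linarith
  qed
  then show "r * \<alpha> \<le> 2" "r \<le> 2" by auto
  show "1 \<le> r" using assms by auto
qed

theorem theorem5p3:
  fixes \<alpha> r :: real and s :: complex and \<mu> :: "real measure"
  assumes "admissible \<alpha> s"
    and "prob_space \<mu>" and "sets \<mu> = sets borel"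
    and "\<forall>z\<in>upper_half. cauchy_transform \<mu> z = mu_G \<alpha> s r z"
    and "(0 < \<alpha> \<and> \<alpha> \<le> 1 \<and> 1 \<le> r \<and> r \<le> 2) \<or> (1 \<le> \<alpha> \<and> \<alpha> \<le> 2 \<and> 1 \<le> r \<and> r \<le> 2 / \<alpha>)"
  shows "UI \<mu>"
proof -
  interpret inversion_window \<alpha> r s
    using assms(1) admissible_window[OF assms(1)] exponent_range[OF assms(5)]
    by unfold_locales (auto simp: admissible_def)
  have left_inverse: "F_inv \<alpha> s r (F_transform \<mu> z) = z" if "z \<in> upper_half" for z
    using assms(4) that F_inv_left_inverse[of z] by (simp add: F_transform_def upper_half_def)
  then have "inj_on (F_transform \<mu>) upper_half" by (rule inj_on_inverseI)
  then show ?thesis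
    unfolding UI_def using F_inv_holomorphic F_inv_inj left_inverse by blast
qed

end
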